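(* Let $n,G$ be positive integers with $2^n$ dividing $G$, let $H=G/2^n$, and let $X=\{A\subseteq G: |A|=H\}$. For $\mathcal A\subseteq X$ define \[\|\mathcal A\|_2=\min\{|x| : x\subseteq G \text{ and } x\not\subseteq a \text{ for all } a\in\mathcal A\}.\] Let $k$ be an integer with $1\leq k\leq H$. If $\mathcal A\subseteq X$ is non-empty and $\|\mathcal A\|_2\leq k$, then \[\frac{|\mathcal A|}{|X|}\leq 1-\prod_{i=0}^{k-1}\frac{H-i}{G-i}.\] Moreover, there is a set $\mathcal A^*\subseteq X$ with $\|\mathcal A^*\|_2=k$ for which equality holds in this inequality.
   Context: Natural numbers are identified with the set of their predecessors, so $G=\{0,1,\ldots,G-1\}$ and $X$ is the family of all $H$-element subsets of $G$. *)

theory Defs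
  imports Complex_Main
begin

definition Xfam :: "nat \<Rightarrow> nat \<Rightarrow> nat set set" where
  "Xfam G H = {A. A \<subseteq> {..<G} \<and> card A = H}"

definition norm2 :: "nat \<Rightarrow> nat set set \<Rightarrow> nat" where
  "norm2 G \<A> = Min {card x | x. x \<subseteq> {..<G} \<and> (\<forall>a\<in>\<A>. \<not> x \<subseteq> a)}"

end

theory Submission
  imports Defs
begin

text \<open>A set x \<subseteq> G is contained in exactly C(G - |x|, H - |x|) members of X, which is
  |X| times the product of (H - i)/(G - i) over i < |x|; this decreases with |x|. If the norm
  of \<A> is at most k, a witness x of size at most k lies in no member of \<A>, so \<A> misses all
  supersets of x in X. Equality is attained by the family of all members of X not containing
  {0, ..., k - 1}: a smaller set x misses some y < k and extends to an H-set avoiding y, so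
  the norm of this family is exactly k.\<close>

lemma card_supersets_with_card:
  assumes "finite U" "x \<subseteq> U" "card x \<le> h"
  shows "card {a. a \<subseteq> U \<and> card a = h \<and> x \<subseteq> a} = (card U - card x) choose (h - card x)"
proof -
  have "finite x" using assms finite_subset by blast
  have "bij_betw (\<lambda>a. a - x) {a. a \<subseteq> U \<and> card a = h \<and> x \<subseteq> a}
          {b. b \<subseteq> U - x \<and> card b = h - card x}"
  proof (rule bij_betw_byWitness[where f' = "\<lambda>b. b \<union> x"])
    show "(\<lambda>a. a - x) ` {a. a \<subseteq> U \<and> card a = h \<and> x \<subseteq> a}
            \<subseteq> {b. b \<subseteq> U - x \<and> card b = h - card x}"
      using \<open>finite x\<close> by (auto simp: card_Diff_subset)
    show "(\<lambda>b. b \<union> x) ` {b. b \<subseteq> U - x \<and> card b = h - card x}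
            \<subseteq> {a. a \<subseteq> U \<and> card a = h \<and> x \<subseteq> a}"
    proof safe
      fix b assume b: "b \<subseteq> U - x" "card b = h - card x"
      then have "finite b" using assms finite_subset by blast
      with b \<open>finite x\<close> have "card (b \<union> x) = card b + card x"
        by (intro card_Un_disjoint) auto
      then show "card (b \<union> x) = h" using b assms by simp
    qed (use assms in auto)
  qed auto
  then have "card {a. a \<subseteq> U \<and> card a = h \<and> x \<subseteq> a} = card (U - x) choose (h - card x)"
    by (simp add: bij_betw_same_card n_subsets assms)
  then show ?thesis using \<open>finite x\<close> assms by (simp add: card_Diff_subset)
qed

lemma binomial_diff_eq_prod:
  fixes m n j :: nat
  assumes "j \<le> m" "m \<le> n"
  shows "real ((n - j) choose (m - j))
           = real (n choose m) * (\<Prod>i<j. (real m - real i) / (real n - real i))"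
  using assms(1)
proof (induction j)
  case 0
  then show ?case by simp
next
  case (Suc j)
  then have "j < m" by simp
  have "Suc (n - Suc j) * ((n - Suc j) choose (m - Suc j))
          = (Suc (n - Suc j) choose Suc (m - Suc j)) * Suc (m - Suc j)"
    by (rule Suc_times_binomial_eq)
  moreover have "Suc (n - Suc j) = n - j" "Suc (m - Suc j) = m - j"
    using \<open>j < m\<close> assms(2) by auto
  ultimately have "real (n - j) * real ((n - Suc j) choose (m - Suc j))
                     = real ((n - j) choose (m - j)) * real (m - j)"
    by (metis of_nat_mult)
  then have "real ((n - Suc j) choose (m - Suc j))
               = real ((n - j) choose (m - j)) * ((real m - real j) / (real n - real j))"
    using \<open>j < m\<close> assms(2) by (simp add: field_simps of_nat_diff)
  then show ?case using Suc by (simp add: mult.assoc)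
qed

lemma prod_ratio_antimono:
  fixes m n j k :: nat
  assumes "j \<le> k" "k \<le> m" "m < n"
  shows "(\<Prod>i<k. (real m - real i) / (real n - real i))
           \<le> (\<Prod>i<j. (real m - real i) / (real n - real i))"
proof -
  let ?f = "\<lambda>i. (real m - real i) / (real n - real i)"
  have "{..<k} = {..<j} \<union> {j..<k}" using assms by auto
  then have "(\<Prod>i<k. ?f i) = (\<Prod>i<j. ?f i) * (\<Prod>i\<in>{j..<k}. ?f i)"
    by (simp add: prod.union_disjoint ivl_disj_int_one(2))
  moreover have "(\<Prod>i\<in>{j..<k}. ?f i) \<le> 1"
    by (rule prod_le_1) (use assms in auto)
  moreover have "(\<Prod>i<j. ?f i) \<ge> 0"
    by (rule prod_nonneg) (use assms in auto)
  ultimately show ?thesis by (simp add: mult_left_le)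
qed

definition Xfam_above :: "nat \<Rightarrow> nat \<Rightarrow> nat set \<Rightarrow> nat set set" where
  "Xfam_above G H x = {a \<in> Xfam G H. x \<subseteq> a}"

lemma finite_Xfam: "finite (Xfam G H)"
  unfolding Xfam_def by (rule finite_subset[of _ "Pow {..<G}"]) auto

lemma card_Xfam: "card (Xfam G H) = G choose H"
  unfolding Xfam_def using n_subsets[of "{..<G}" H] by simp

lemma card_Xfam_minus_above:
  assumes "x \<subseteq> {..<G}" "card x \<le> H" "H \<le> G"
  shows "real (card (Xfam G H - Xfam_above G H x))
           = real (card (Xfam G H)) * (1 - (\<Prod>i<card x. (real H - real i) / (real G - real i)))"
proof -
  have "Xfam_above G H x = {a. a \<subseteq> {..<G} \<and> card a = H \<and> x \<subseteq> a}"
    unfolding Xfam_above_def Xfam_def by auto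
  then have "real (card (Xfam_above G H x))
               = real (card (Xfam G H)) * (\<Prod>i<card x. (real H - real i) / (real G - real i))"
    using assms by (simp add: card_supersets_with_card binomial_diff_eq_prod card_Xfam)
  moreover have "Xfam_above G H x \<subseteq> Xfam G H"
    unfolding Xfam_above_def by auto
  ultimately show ?thesis
    using finite_Xfam by (simp add: card_Diff_subset finite_subset card_mono of_nat_diff algebra_simps)
qed

lemma Xfam_not_supset_lessThan:
  assumes "a \<in> Xfam G H" "H < G"
  shows "\<not> {..<G} \<subseteq> a"
proof
  assume "{..<G} \<subseteq> a"
  with assms(1) have "a = {..<G}" unfolding Xfam_def by auto
  with assms show False unfolding Xfam_def by simp
qed

lemma norm2_le:
  assumes "x \<subseteq> {..<G}" "\<forall>a\<in>\<A>. \<not> x \<subseteq> a"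
  shows "norm2 G \<A> \<le> card x"
proof -
  have "{card x | x. x \<subseteq> {..<G} \<and> (\<forall>a\<in>\<A>. \<not> x \<subseteq> a)} \<subseteq> {..G}"
    by (auto dest: card_mono[OF finite_lessThan])
  then show ?thesis
    unfolding norm2_def using assms by (intro Min_le) (auto intro: finite_subset)
qed

lemma norm2_witness:
  assumes "\<forall>a\<in>\<A>. \<not> {..<G} \<subseteq> a"
  obtains x where "x \<subseteq> {..<G}" "\<forall>a\<in>\<A>. \<not> x \<subseteq> a" "card x = norm2 G \<A>"
proof -
  let ?M = "{card x | x. x \<subseteq> {..<G} \<and> (\<forall>a\<in>\<A>. \<not> x \<subseteq> a)}"
  have "?M \<subseteq> {..G}"
    by (auto dest: card_mono[OF finite_lessThan])
  moreover have "?M \<noteq> {}" using assms by blast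
  ultimately have "Min ?M \<in> ?M" by (intro Min_in) (auto intro: finite_subset)
  then show ?thesis using that unfolding norm2_def by auto
qed

lemma Xfam_density_le:
  assumes "\<A> \<subseteq> Xfam G H" "norm2 G \<A> \<le> k" "k \<le> H" "H < G"
  shows "real (card \<A>) / real (card (Xfam G H))
           \<le> 1 - (\<Prod>i<k. (real H - real i) / (real G - real i))"
proof -
  have "\<forall>a\<in>\<A>. \<not> {..<G} \<subseteq> a"
    using Xfam_not_supset_lessThan assms(1,4) by blast
  then obtain x where x: "x \<subseteq> {..<G}" "\<forall>a\<in>\<A>. \<not> x \<subseteq> a" "card x = norm2 G \<A>"
    by (rule norm2_witness)
  have "\<A> \<subseteq> Xfam G H - Xfam_above G H x"
    using assms(1) x(2) unfolding Xfam_above_def by auto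
  then have "real (card \<A>) \<le> real (card (Xfam G H - Xfam_above G H x))"
    using finite_Xfam by (simp add: card_mono)
  also have "\<dots> = real (card (Xfam G H))
                    * (1 - (\<Prod>i<card x. (real H - real i) / (real G - real i)))"
    using x assms by (intro card_Xfam_minus_above) auto
  also have "\<dots> \<le> real (card (Xfam G H)) * (1 - (\<Prod>i<k. (real H - real i) / (real G - real i)))"
    using prod_ratio_antimono[of "card x" k H G] x assms by (intro mult_left_mono) auto
  finally have "real (card \<A>) \<le> (1 - (\<Prod>i<k. (real H - real i) / (real G - real i)))
                                    * real (card (Xfam G H))"
    by (simp only: mult.commute)
  moreover have "real (card (Xfam G H)) > 0"
    using assms(4) by (simp add: card_Xfam)
  ultimately show ?thesis
    by (simp only: pos_divide_le_eq)
qed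

lemma Xfam_extend_avoiding:
  assumes "x \<subseteq> {..<G}" "y < G" "y \<notin> x" "card x \<le> H" "H < G"
  shows "\<exists>a\<in>Xfam G H. x \<subseteq> a \<and> y \<notin> a"
proof -
  have "H \<le> card ({..<G} - {y})" using assms(2,5) by simp
  then obtain a where "x \<subseteq> a" "a \<subseteq> {..<G} - {y}" "card a = H"
    using exists_subset_between[of x H "{..<G} - {y}"] assms(1,3,4) by auto
  then show ?thesis unfolding Xfam_def by auto
qed

lemma norm2_Xfam_minus_above_lessThan:
  assumes "k \<le> H" "H < G"
  shows "norm2 G (Xfam G H - Xfam_above G H {..<k}) = k"
proof (rule antisym)
  let ?\<A> = "Xfam G H - Xfam_above G H {..<k}"
  have "\<forall>a\<in>?\<A>. \<not> {..<k} \<subseteq> a"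
    by (simp add: Xfam_above_def)
  then show "norm2 G ?\<A> \<le> k"
    using norm2_le[of "{..<k}" G ?\<A>] assms by simp
  have "\<forall>a\<in>?\<A>. \<not> {..<G} \<subseteq> a"
    using Xfam_not_supset_lessThan assms(2) by blast
  then obtain x where x: "x \<subseteq> {..<G}" "\<forall>a\<in>?\<A>. \<not> x \<subseteq> a" "card x = norm2 G ?\<A>"
    by (rule norm2_witness)
  show "k \<le> norm2 G ?\<A>"
  proof (rule ccontr)
    assume "\<not> k \<le> norm2 G ?\<A>"
    then have "card x < k" using x(3) by simp
    moreover have "finite x" using x(1) finite_subset by blast
    ultimately have "\<not> {..<k} \<subseteq> x"
      using card_mono[of x "{..<k}"] by auto
    then obtain y where "y < k" "y \<notin> x" by blast
    then obtain a where "a \<in> Xfam G H" "x \<subseteq> a" "y \<notin> a"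
      using Xfam_extend_avoiding[of x G y H] x(1) \<open>card x < k\<close> assms by auto
    then show False using x(2) \<open>y < k\<close> unfolding Xfam_above_def by auto
  qed
qed

theorem proposition4p9:
  fixes n G H k :: nat
  assumes "n > 0" and "G > 0" and "2 ^ n dvd G" and "H = G div 2 ^ n"
    and "1 \<le> k" and "k \<le> H"
  shows "(\<forall>\<A>. \<A> \<subseteq> Xfam G H \<and> \<A> \<noteq> {} \<and> norm2 G \<A> \<le> k \<longrightarrow>
            real (card \<A>) / real (card (Xfam G H))
              \<le> 1 - (\<Prod>i<k. (real H - real i) / (real G - real i)))
      \<and> (\<exists>\<A>s. \<A>s \<subseteq> Xfam G H \<and> norm2 G \<A>s = k \<and>
            real (card \<A>s) / real (card (Xfam G H))
              = 1 - (\<Prod>i<k. (real H - real i) / (real G - real i)))"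
proof -
  have "(2::nat) \<le> 2 ^ n" using assms(1) by (simp add: self_le_power)
  then have "H < G" using assms(2,4) by (simp add: div_less_dividend)
  have "real (card (Xfam G H)) \<noteq> 0"
    using \<open>H < G\<close> by (simp add: card_Xfam)
  moreover have "real (card (Xfam G H - Xfam_above G H {..<k}))
      = real (card (Xfam G H)) * (1 - (\<Prod>i<k. (real H - real i) / (real G - real i)))"
    using card_Xfam_minus_above[of "{..<k}" G H] \<open>H < G\<close> assms(6) by simp
  ultimately have "real (card (Xfam G H - Xfam_above G H {..<k})) / real (card (Xfam G H))
      = 1 - (\<Prod>i<k. (real H - real i) / (real G - real i))"
    by simp
  moreover have "norm2 G (Xfam G H - Xfam_above G H {..<k}) = k"
    using assms(6) \<open>H < G\<close> by (rule norm2_Xfam_minus_above_lessThan)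
  ultimately show ?thesis
    using Xfam_density_le[OF _ _ assms(6) \<open>H < G\<close>] by blast
qed

end
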